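(* Let $\mathbb{F}\in\{\mathbb{R},\mathbb{C}\}$ and let $\mathcal{P}(M,N)$ be the set of Parseval frames for $\mathbb{F}^N$ consisting of $M$ vectors. If $\Phi=\{\varphi_i\}_{i=1}^M\in\mathcal{P}(M,N)$ is an equiangular Parseval frame and $\Psi=\{\psi_i\}_{i=1}^M\in\mathcal{P}(M,N)$, then $TC(\Psi)\leq TC(\Phi)$. Consequently, when an equiangular Parseval frame exists in $\mathcal{P}(M,N)$, the maximizers of $TC$ over $\mathcal{P}(M,N)$ (equivalently, the maximizers of $\sum_{i,j}|\langle\varphi_i,\varphi_j\rangle|$ over $\mathcal{P}(M,N)$) are precisely the equiangular Parseval frames in $\mathcal{P}(M,N)$.
   Context: A Parseval frame for $\mathbb{F}^N$ is a family $\Phi=\{\varphi_i\}_{i=1}^M\subseteq\mathbb{F}^N$ whose $N\times M$ matrix (columns $\varphi_i$) satisfies $\Phi\Phi^*=I$. A Parseval frame is equiangular if $\|\varphi_i\|=\|\varphi_j\|$ for all $i,j$ and there is a constant $c$ with $|\langle\varphi_i,\varphi_j\rangle|=c$ for all $i\neq j$. The total coherence is $TC(\Phi)=\sum_{i\neq j}|\langle\varphi_i,\varphi_j\rangle|$. *)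

theory Defs
  imports Complex_Main
begin

text \<open>A family of M vectors in F^N (F = R or C, embedded in C^N) is a function
  Phi :: nat => nat => complex, where Phi i is the i-th vector (i < M) and
  Phi i k is its k-th coordinate (k < N). The scalar field is represented by
  the set K of allowed coordinates: K = Reals (F = R) or K = UNIV (F = C).\<close>

definition vinner :: "nat \<Rightarrow> (nat \<Rightarrow> complex) \<Rightarrow> (nat \<Rightarrow> complex) \<Rightarrow> complex" where
  "vinner N x y = (\<Sum>k<N. x k * cnj (y k))"

definition vnorm :: "nat \<Rightarrow> (nat \<Rightarrow> complex) \<Rightarrow> real" where
  "vnorm N x = sqrt (\<Sum>k<N. (cmod (x k))\<^sup>2)"

text \<open>Parseval frame: the N x M synthesis matrix (columns Phi i) satisfies
  Phi Phi^* = I, i.e. entry (k,l) is sum_i Phi_i(k) * conj(Phi_i(l)).\<close>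
definition parseval_frame :: "complex set \<Rightarrow> nat \<Rightarrow> nat \<Rightarrow> (nat \<Rightarrow> nat \<Rightarrow> complex) \<Rightarrow> bool" where
  "parseval_frame K N M Phi \<longleftrightarrow>
     (\<forall>i<M. \<forall>k<N. Phi i k \<in> K) \<and>
     (\<forall>k<N. \<forall>l<N. (\<Sum>i<M. Phi i k * cnj (Phi i l)) = (if k = l then 1 else 0))"

definition equiangular :: "nat \<Rightarrow> nat \<Rightarrow> (nat \<Rightarrow> nat \<Rightarrow> complex) \<Rightarrow> bool" where
  "equiangular N M Phi \<longleftrightarrow>
     (\<forall>i<M. \<forall>j<M. vnorm N (Phi i) = vnorm N (Phi j)) \<and>
     (\<exists>c. \<forall>i<M. \<forall>j<M. i \<noteq> j \<longrightarrow> cmod (vinner N (Phi i) (Phi j)) = c)"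

definition TC :: "nat \<Rightarrow> nat \<Rightarrow> (nat \<Rightarrow> nat \<Rightarrow> complex) \<Rightarrow> real" where
  "TC N M Phi = (\<Sum>i<M. \<Sum>j<M. if i \<noteq> j then cmod (vinner N (Phi i) (Phi j)) else 0)"

definition TC_full :: "nat \<Rightarrow> nat \<Rightarrow> (nat \<Rightarrow> nat \<Rightarrow> complex) \<Rightarrow> real" where
  "TC_full N M Phi = (\<Sum>i<M. \<Sum>j<M. cmod (vinner N (Phi i) (Phi j)))"

end

theory Submission
  imports Defs "HOL-Analysis.Convex"
begin

text \<open>A Parseval frame satisfies \<open>\<Sum>\<^sub>j |\<langle>x,\<psi>\<^sub>j\<rangle>|\<^sup>2 = \<parallel>x\<parallel>\<^sup>2\<close>; applied to \<open>x = \<psi>\<^sub>i\<close> and summed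
  over \<open>i\<close> this gives \<open>\<Sum>\<^sub>i\<^sub>,\<^sub>j |\<langle>\<psi>\<^sub>i,\<psi>\<^sub>j\<rangle>|\<^sup>2 = \<Sum>\<^sub>i \<parallel>\<psi>\<^sub>i\<parallel>\<^sup>2 = N\<close>. Cauchy-Schwarz for the
  \<open>M(M-1)\<close> off-diagonal moduli and for the \<open>M\<close> squared norms then yields
  \<open>TC(\<Psi>)\<^sup>2 \<le> N(M-1)(M-N)\<close>; more precisely the gap is the sum of the two Cauchy-Schwarz
  defects, so equality holds exactly when both families are constant, i.e. when the frame is
  equiangular. The admissible coordinate set \<open>K\<close> plays no role.\<close>

lemma sum_diff_squared_pairs:
  fixes f :: "'a \<Rightarrow> real"
  shows "(\<Sum>i\<in>I. \<Sum>j\<in>I. (f i - f j)\<^sup>2) = 2 * ((\<Sum>i\<in>I. (f i)\<^sup>2) * card I - (\<Sum>i\<in>I. f i)\<^sup>2)"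
  by (simp add: power2_diff sum.distrib sum_subtractf sum_distrib_left sum_distrib_right
      power2_eq_square algebra_simps)

lemma sum_squared_eq_sum_of_squares_iff:
  fixes f :: "'a \<Rightarrow> real"
  assumes "finite I"
  shows "(\<Sum>i\<in>I. f i)\<^sup>2 = (\<Sum>i\<in>I. (f i)\<^sup>2) * card I \<longleftrightarrow> (\<exists>c. \<forall>i\<in>I. f i = c)"
proof
  assume "(\<Sum>i\<in>I. f i)\<^sup>2 = (\<Sum>i\<in>I. (f i)\<^sup>2) * card I"
  then have zero: "(\<Sum>i\<in>I. \<Sum>j\<in>I. (f i - f j)\<^sup>2) = 0"
    by (simp add: sum_diff_squared_pairs)
  show "\<exists>c. \<forall>i\<in>I. f i = c"
  proof (cases "I = {}")
    case False
    then obtain i0 where i0: "i0 \<in> I" by blast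
    have row: "(\<Sum>j\<in>I. (f i0 - f j)\<^sup>2) = 0"
      by (rule sum_nonneg_0[OF assms _ zero i0]) (simp add: sum_nonneg)
    have "f j = f i0" if "j \<in> I" for j
      using sum_nonneg_0[OF assms _ row that] by simp
    then show ?thesis by blast
  qed simp
next
  assume "\<exists>c. \<forall>i\<in>I. f i = c"
  then obtain c where "\<forall>i\<in>I. f i = c" by blast
  then show "(\<Sum>i\<in>I. f i)\<^sup>2 = (\<Sum>i\<in>I. (f i)\<^sup>2) * card I"
    by (simp add: power2_eq_square)
qed

definition off_diagonal :: "nat \<Rightarrow> (nat \<times> nat) set" where
  "off_diagonal M = {(i, j). i < M \<and> j < M \<and> i \<noteq> j}"

lemma finite_off_diagonal: "finite (off_diagonal M)"
  unfolding off_diagonal_def by (rule finite_subset[of _ "{..<M} \<times> {..<M}"]) auto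

lemma card_off_diagonal: "real (card (off_diagonal M)) = real M * (real M - 1)"
proof -
  have "off_diagonal M = {..<M} \<times> {..<M} - (\<lambda>i. (i, i)) ` {..<M}"
    unfolding off_diagonal_def by auto
  moreover have "card ((\<lambda>i. (i, i)) ` {..<M}) = M"
    by (subst card_image) (auto simp: inj_on_def)
  ultimately have "card (off_diagonal M) = M * M - M"
    by (simp add: card_Diff_subset card_cartesian_product image_subset_iff)
  then show ?thesis
    by (simp add: algebra_simps)
qed

lemma sum_off_diagonal:
  "(\<Sum>i<M. \<Sum>j<M. if i \<noteq> j then h i j else 0) = (\<Sum>p\<in>off_diagonal M. h (fst p) (snd p))"
proof -
  have "off_diagonal M = {p \<in> {..<M} \<times> {..<M}. fst p \<noteq> snd p}"
    unfolding off_diagonal_def by auto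
  then show ?thesis
    by (simp add: sum.cartesian_product sum.inter_filter case_prod_unfold)
qed

lemma sum_split_diagonal:
  "(\<Sum>i<M. \<Sum>j<M. h i j) = (\<Sum>p\<in>off_diagonal M. h (fst p) (snd p)) + (\<Sum>i<M. h i i)"
proof -
  have row: "(\<Sum>j<M. h i j) = (\<Sum>j<M. if i \<noteq> j then h i j else 0) + h i i" if "i < M" for i
  proof -
    have "{..<M} \<inter> {j. i \<noteq> j} = {..<M} - {i}" by auto
    with that show ?thesis
      by (simp add: sum.If_cases sum.remove add.commute)
  qed
  have "(\<Sum>i<M. \<Sum>j<M. h i j) = (\<Sum>i<M. (\<Sum>j<M. if i \<noteq> j then h i j else 0) + h i i)"
    by (rule sum.cong[OF refl], rule row) simp
  also have "\<dots> = (\<Sum>p\<in>off_diagonal M. h (fst p) (snd p)) + (\<Sum>i<M. h i i)"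
    by (simp only: sum.distrib sum_off_diagonal)
  finally show ?thesis .
qed

lemma vnorm_nonneg: "vnorm N x \<ge> 0"
  unfolding vnorm_def by (simp add: sum_nonneg)

lemma of_real_vnorm_power2: "complex_of_real ((vnorm N x)\<^sup>2) = vinner N x x"
  unfolding vnorm_def vinner_def
  by (simp only: real_sqrt_pow2 sum_nonneg zero_le_power2 of_real_sum complex_norm_square)

lemma cmod_vinner_self: "cmod (vinner N x x) = (vnorm N x)\<^sup>2"
  unfolding of_real_vnorm_power2[symmetric] norm_of_real by simp

lemma TC_eq_sum_off_diagonal:
  "TC N M Phi = (\<Sum>p\<in>off_diagonal M. cmod (vinner N (Phi (fst p)) (Phi (snd p))))"
  unfolding TC_def by (rule sum_off_diagonal)

lemma TC_nonneg: "TC N M Phi \<ge> 0"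
  unfolding TC_def by (intro sum_nonneg) auto

lemma TC_full_eq_TC_plus_sum_vnorm_sq:
  "TC_full N M Phi = TC N M Phi + (\<Sum>i<M. (vnorm N (Phi i))\<^sup>2)"
  unfolding TC_full_def TC_eq_sum_off_diagonal sum_split_diagonal by (simp add: cmod_vinner_self)

lemma parseval_frame_reconstruction:
  assumes "parseval_frame K N M Phi" and "k < N"
  shows "(\<Sum>j<M. vinner N x (Phi j) * Phi j k) = x k"
proof -
  have "(\<Sum>j<M. vinner N x (Phi j) * Phi j k) = (\<Sum>j<M. \<Sum>l<N. x l * (Phi j k * cnj (Phi j l)))"
    unfolding vinner_def by (simp add: sum_distrib_left sum_distrib_right mult_ac)
  also have "\<dots> = (\<Sum>l<N. x l * (\<Sum>j<M. Phi j k * cnj (Phi j l)))"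
    by (subst sum.swap) (simp add: sum_distrib_left)
  also have "\<dots> = (\<Sum>l<N. x l * (if k = l then 1 else 0))"
    using assms unfolding parseval_frame_def by (intro sum.cong) auto
  also have "\<dots> = x k"
    using assms(2) by (simp add: if_distrib cong: if_cong)
  finally show ?thesis .
qed

lemma parseval_frame_sum_cmod_vinner_sq:
  assumes "parseval_frame K N M Phi"
  shows "(\<Sum>j<M. (cmod (vinner N x (Phi j)))\<^sup>2) = (vnorm N x)\<^sup>2"
proof -
  have "complex_of_real (\<Sum>j<M. (cmod (vinner N x (Phi j)))\<^sup>2)
      = (\<Sum>j<M. \<Sum>k<N. vinner N x (Phi j) * Phi j k * cnj (x k))"
    by (simp only: of_real_sum complex_norm_square) (simp add: vinner_def sum_distrib_left mult_ac)
  also have "\<dots> = (\<Sum>k<N. (\<Sum>j<M. vinner N x (Phi j) * Phi j k) * cnj (x k))"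
    by (subst sum.swap) (simp add: sum_distrib_right)
  also have "\<dots> = vinner N x x"
    using parseval_frame_reconstruction[OF assms] by (simp add: vinner_def)
  also have "\<dots> = complex_of_real ((vnorm N x)\<^sup>2)"
    by (rule of_real_vnorm_power2[symmetric])
  finally show ?thesis
    by (simp only: of_real_eq_iff)
qed

lemma parseval_frame_sum_vnorm_sq:
  assumes "parseval_frame K N M Phi"
  shows "(\<Sum>i<M. (vnorm N (Phi i))\<^sup>2) = real N"
proof -
  have "complex_of_real (\<Sum>i<M. (vnorm N (Phi i))\<^sup>2) = (\<Sum>i<M. \<Sum>k<N. Phi i k * cnj (Phi i k))"
    by (simp only: of_real_sum of_real_vnorm_power2 vinner_def)
  also have "\<dots> = (\<Sum>k<N. \<Sum>i<M. Phi i k * cnj (Phi i k))"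
    by (rule sum.swap)
  also have "\<dots> = of_real (real N)"
    using assms by (simp add: parseval_frame_def)
  finally show ?thesis
    by (simp only: of_real_eq_iff)
qed

lemma parseval_frame_sum_off_diagonal_sq:
  assumes "parseval_frame K N M Phi"
  shows "(\<Sum>p\<in>off_diagonal M. (cmod (vinner N (Phi (fst p)) (Phi (snd p))))\<^sup>2)
    = real N - (\<Sum>i<M. ((vnorm N (Phi i))\<^sup>2)\<^sup>2)"
proof -
  have "real N = (\<Sum>i<M. \<Sum>j<M. (cmod (vinner N (Phi i) (Phi j)))\<^sup>2)"
    using assms by (simp add: parseval_frame_sum_cmod_vinner_sq parseval_frame_sum_vnorm_sq)
  also have "\<dots> = (\<Sum>p\<in>off_diagonal M. (cmod (vinner N (Phi (fst p)) (Phi (snd p))))\<^sup>2)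
      + (\<Sum>i<M. ((vnorm N (Phi i))\<^sup>2)\<^sup>2)"
    by (simp add: sum_split_diagonal cmod_vinner_self)
  finally show ?thesis
    by simp
qed

definition TC_bound :: "nat \<Rightarrow> nat \<Rightarrow> real" where
  "TC_bound N M = real N * (real M - 1) * (real M - real N)"

lemma parseval_frame_TC_bound_minus_TC_squared:
  fixes K N M Phi
  defines "a \<equiv> \<lambda>p. cmod (vinner N (Phi (fst p)) (Phi (snd p)))"
    and "d \<equiv> \<lambda>i. (vnorm N (Phi i))\<^sup>2"
  assumes "parseval_frame K N M Phi"
  shows "TC_bound N M - (TC N M Phi)\<^sup>2 =
      ((\<Sum>p\<in>off_diagonal M. (a p)\<^sup>2) * card (off_diagonal M) - (\<Sum>p\<in>off_diagonal M. a p)\<^sup>2)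
    + (real M - 1) * ((\<Sum>i<M. (d i)\<^sup>2) * card {..<M} - (\<Sum>i<M. d i)\<^sup>2)"
proof -
  have TC: "TC N M Phi = (\<Sum>p\<in>off_diagonal M. a p)"
    unfolding a_def by (rule TC_eq_sum_off_diagonal)
  have sum_d: "(\<Sum>i<M. d i) = real N"
    unfolding d_def using assms(3) by (rule parseval_frame_sum_vnorm_sq)
  have sum_a_sq: "(\<Sum>p\<in>off_diagonal M. (a p)\<^sup>2) = real N - (\<Sum>i<M. (d i)\<^sup>2)"
    unfolding a_def d_def using assms(3) by (rule parseval_frame_sum_off_diagonal_sq)
  show ?thesis
    unfolding TC sum_d sum_a_sq card_off_diagonal TC_bound_def
    by (simp add: algebra_simps power2_eq_square)
qed

lemma equiangular_iff_constant:
  "equiangular N M Phi \<longleftrightarrow>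
     (\<exists>c. \<forall>i\<in>{..<M}. (vnorm N (Phi i))\<^sup>2 = c) \<and>
     (\<exists>c. \<forall>p\<in>off_diagonal M. cmod (vinner N (Phi (fst p)) (Phi (snd p))) = c)"
proof -
  have "(\<forall>i<M. \<forall>j<M. vnorm N (Phi i) = vnorm N (Phi j)) \<longleftrightarrow>
      (\<exists>c. \<forall>i\<in>{..<M}. (vnorm N (Phi i))\<^sup>2 = c)"
  proof
    assume all: "\<forall>i<M. \<forall>j<M. vnorm N (Phi i) = vnorm N (Phi j)"
    show "\<exists>c. \<forall>i\<in>{..<M}. (vnorm N (Phi i))\<^sup>2 = c"
    proof (intro exI[of _ "(vnorm N (Phi 0))\<^sup>2"] ballI)
      fix i assume "i \<in> {..<M}"
      then have "i < M" "0 < M" by auto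
      with all show "(vnorm N (Phi i))\<^sup>2 = (vnorm N (Phi 0))\<^sup>2" by metis
    qed
  next
    assume "\<exists>c. \<forall>i\<in>{..<M}. (vnorm N (Phi i))\<^sup>2 = c"
    then obtain c where c: "\<forall>i\<in>{..<M}. (vnorm N (Phi i))\<^sup>2 = c" by blast
    show "\<forall>i<M. \<forall>j<M. vnorm N (Phi i) = vnorm N (Phi j)"
    proof (intro allI impI)
      fix i j assume "i < M" "j < M"
      with c have "(vnorm N (Phi i))\<^sup>2 = (vnorm N (Phi j))\<^sup>2" by simp
      then show "vnorm N (Phi i) = vnorm N (Phi j)"
        by (simp add: power2_eq_iff_nonneg vnorm_nonneg)
    qed
  qed
  moreover have "(\<exists>c. \<forall>i<M. \<forall>j<M. i \<noteq> j \<longrightarrow> cmod (vinner N (Phi i) (Phi j)) = c) \<longleftrightarrow>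
      (\<exists>c. \<forall>p\<in>off_diagonal M. cmod (vinner N (Phi (fst p)) (Phi (snd p))) = c)"
    by (simp add: off_diagonal_def) blast
  ultimately show ?thesis
    unfolding equiangular_def by blast
qed

lemma parseval_frame_TC_squared_le:
  assumes "parseval_frame K N M Phi"
  shows "(TC N M Phi)\<^sup>2 \<le> TC_bound N M"
proof -
  let ?d = "\<lambda>i. (vnorm N (Phi i))\<^sup>2"
  have "(\<Sum>i<M. ?d i)\<^sup>2 \<le> (\<Sum>i<M. (?d i)\<^sup>2) * card {..<M}"
    by (rule sum_squared_le_sum_of_squares)
  then have "0 \<le> (real M - 1) * ((\<Sum>i<M. (?d i)\<^sup>2) * card {..<M} - (\<Sum>i<M. ?d i)\<^sup>2)"
    by (cases "M = 0") simp_all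
  then show ?thesis
    using parseval_frame_TC_bound_minus_TC_squared[OF assms]
      sum_squared_le_sum_of_squares[of "\<lambda>p. cmod (vinner N (Phi (fst p)) (Phi (snd p)))" "off_diagonal M"]
    by linarith
qed

lemma parseval_frame_TC_squared_eq_bound_iff:
  assumes "parseval_frame K N M Phi"
  shows "(TC N M Phi)\<^sup>2 = TC_bound N M \<longleftrightarrow> equiangular N M Phi"
proof -
  define a where "a = (\<lambda>p. cmod (vinner N (Phi (fst p)) (Phi (snd p))))"
  define d where "d = (\<lambda>i. (vnorm N (Phi i))\<^sup>2)"
  define D1 where "D1 = (\<Sum>p\<in>off_diagonal M. (a p)\<^sup>2) * card (off_diagonal M) - (\<Sum>p\<in>off_diagonal M. a p)\<^sup>2"
  define D2 where "D2 = (\<Sum>i<M. (d i)\<^sup>2) * card {..<M} - (\<Sum>i<M. d i)\<^sup>2"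
  have gap: "TC_bound N M - (TC N M Phi)\<^sup>2 = D1 + (real M - 1) * D2"
    unfolding D1_def D2_def a_def d_def using assms by (rule parseval_frame_TC_bound_minus_TC_squared)
  have "D1 \<ge> 0" "D2 \<ge> 0"
    unfolding D1_def D2_def diff_ge_0_iff_ge by (rule sum_squared_le_sum_of_squares)+
  have D1_eq_0: "D1 = 0 \<longleftrightarrow> (\<exists>c. \<forall>p\<in>off_diagonal M. a p = c)"
    by (auto simp: D1_def sum_squared_eq_sum_of_squares_iff[OF finite_off_diagonal, symmetric])
  have D2_eq_0: "D2 = 0 \<longleftrightarrow> (\<exists>c. \<forall>i\<in>{..<M}. d i = c)"
    by (auto simp: D2_def sum_squared_eq_sum_of_squares_iff[of "{..<M}", symmetric])
  have "D2 = 0" if "M \<le> 1"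
  proof -
    have "M = 0 \<or> M = 1"
      using that by linarith
    then show ?thesis
      unfolding D2_def by auto
  qed
  then have "(TC N M Phi)\<^sup>2 = TC_bound N M \<longleftrightarrow> D1 = 0 \<and> D2 = 0"
    using gap \<open>D1 \<ge> 0\<close> \<open>D2 \<ge> 0\<close>
    by (cases "M \<le> 1") (auto simp: add_nonneg_eq_0_iff)
  also have "\<dots> \<longleftrightarrow> equiangular N M Phi"
    unfolding D1_eq_0 D2_eq_0 equiangular_iff_constant a_def d_def by blast
  finally show ?thesis .
qed

lemma TC_le_TC_of_equiangular:
  assumes "parseval_frame K N M Phi" "equiangular N M Phi" "parseval_frame K' N M Psi"
  shows "TC N M Psi \<le> TC N M Phi"
proof -
  have "(TC N M Psi)\<^sup>2 \<le> (TC N M Phi)\<^sup>2"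
    using assms parseval_frame_TC_squared_le parseval_frame_TC_squared_eq_bound_iff by metis
  then show ?thesis
    using TC_nonneg by (rule power2_le_imp_le)
qed

lemma equiangular_if_TC_ge_TC_of_equiangular:
  assumes "parseval_frame K N M Phi" "equiangular N M Phi" "parseval_frame K' N M Psi"
    and "TC N M Phi \<le> TC N M Psi"
  shows "equiangular N M Psi"
proof -
  have "(TC N M Phi)\<^sup>2 \<le> (TC N M Psi)\<^sup>2"
    using assms(4) TC_nonneg by (rule power_mono)
  then have "(TC N M Psi)\<^sup>2 = TC_bound N M"
    using assms parseval_frame_TC_squared_le parseval_frame_TC_squared_eq_bound_iff
    by (metis order_antisym)
  then show ?thesis
    using assms(3) parseval_frame_TC_squared_eq_bound_iff by blast
qed

theorem theorem2:
  fixes K :: "complex set" and N M :: nat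
  assumes field: "K = \<real> \<or> K = UNIV"
  shows "(\<forall>Phi Psi. parseval_frame K N M Phi \<and> equiangular N M Phi \<and> parseval_frame K N M Psi
            \<longrightarrow> TC N M Psi \<le> TC N M Phi)
       \<and> ((\<exists>Phi. parseval_frame K N M Phi \<and> equiangular N M Phi) \<longrightarrow>
            (\<forall>Psi. (parseval_frame K N M Psi \<and>
                     (\<forall>Psi'. parseval_frame K N M Psi' \<longrightarrow> TC N M Psi' \<le> TC N M Psi))
                   \<longleftrightarrow> (parseval_frame K N M Psi \<and> equiangular N M Psi))
          \<and> (\<forall>Psi. (parseval_frame K N M Psi \<and>
                     (\<forall>Psi'. parseval_frame K N M Psi' \<longrightarrow> TC_full N M Psi' \<le> TC_full N M Psi))
                   \<longleftrightarrow> (parseval_frame K N M Psi \<and> equiangular N M Psi)))"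
proof -
  have TC_full_le_iff: "TC_full N M Psi' \<le> TC_full N M Psi \<longleftrightarrow> TC N M Psi' \<le> TC N M Psi"
    if "parseval_frame K N M Psi'" "parseval_frame K N M Psi" for Psi Psi'
    using that by (simp add: TC_full_eq_TC_plus_sum_vnorm_sq parseval_frame_sum_vnorm_sq)
  show ?thesis
    using TC_le_TC_of_equiangular equiangular_if_TC_ge_TC_of_equiangular TC_full_le_iff by meson
qed

end
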